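(* Let the iterates be generated by the Fast PL-ADMM-PS algorithm and set $\hat{\boldsymbol{\lambda}}^{k+1}=\boldsymbol{\lambda}^k+\beta(\mathcal{A}(\mathbf{z}^k)-\mathbf{b})$. Then for every $k\ge0$, every $i\in\{1,\dots,n\}$ and every $\mathbf{x}_i$, $$\frac{1-\theta^{(k+1)}}{(\theta^{(k+1)})^2}\bigl(f_i(\mathbf{x}_i^{k+1})-f_i(\mathbf{x}_i)\bigr)-\frac{1}{\theta^{(k)}}\bigl\langle\mathcal{A}_i^T(\hat{\boldsymbol{\lambda}}^{k+1}),\mathbf{x}_i-\mathbf{z}_i^{k+1}\bigr\rangle$$ $$\le\frac{1-\theta^{(k)}}{(\theta^{(k)})^2}\bigl(f_i(\mathbf{x}_i^k)-f_i(\mathbf{x}_i)\bigr)+\frac{L_i}{2}\bigl(\|\mathbf{z}_i^k-\mathbf{x}_i\|^2-\|\mathbf{z}_i^{k+1}-\mathbf{x}_i\|^2\bigr)+\frac{\beta\eta_i}{2\theta^{(k)}}\bigl(\|\mathbf{z}_i^k-\mathbf{x}_i\|^2-\|\mathbf{z}_i^{k+1}-\mathbf{x}_i\|^2-\|\mathbf{z}_i^{k+1}-\mathbf{z}_i^k\|^2\bigr).$$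
   Context: Setting: finite-dimensional real inner product spaces with induced norms $\|\cdot\|$. Problem: $\min\sum_{i=1}^n f_i(\mathbf{x}_i)$, $f_i=g_i+h_i$, subject to $\mathcal{A}(\mathbf{x}):=\sum_{i=1}^n\mathcal{A}_i(\mathbf{x}_i)=\mathbf{b}$, where $\mathbf{x}=(\mathbf{x}_1,\dots,\mathbf{x}_n)$, each $g_i,h_i$ is proper convex lower semicontinuous, $g_i$ is differentiable with $L_i$-Lipschitz gradient ($L_i>0$), each $\mathcal{A}_i$ is a nonzero linear map (adjoint $\mathcal{A}_i^T$, operator norm $\|\mathcal{A}_i\|$) into a common space. Fast PL-ADMM-PS: fix $\beta>0$ and $\eta_i>n\|\mathcal{A}_i\|^2$; given $\mathbf{x}^0,\mathbf{z}^0,\boldsymbol{\lambda}^0$ and $\theta^{(0)}=1$, for $k=0,1,2,\dots$, for each $i=1,\dots,n$ (in parallel): $\mathbf{y}_i^{k+1}=(1-\theta^{(k)})\mathbf{x}_i^k+\theta^{(k)}\mathbf{z}_i^k$; $\mathbf{z}_i^{k+1}=\arg\min_{\mathbf{x}_i}\ \langle\nabla g_i(\mathbf{y}_i^{k+1}),\mathbf{x}_i\rangle+h_i(\mathbf{x}_i)+\langle\boldsymbol{\lambda}^k,\mathcal{A}_i(\mathbf{x}_i)\rangle+\langle\beta\mathcal{A}_i^T(\mathcal{A}(\mathbf{z}^k)-\mathbf{b}),\mathbf{x}_i\rangle+\frac{L_i\theta^{(k)}+\beta\eta_i}{2}\|\mathbf{x}_i-\mathbf{z}_i^k\|^2$;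 $\mathbf{x}_i^{k+1}=(1-\theta^{(k)})\mathbf{x}_i^k+\theta^{(k)}\mathbf{z}_i^{k+1}$; then $\boldsymbol{\lambda}^{k+1}=\boldsymbol{\lambda}^k+\beta(\mathcal{A}(\mathbf{z}^{k+1})-\mathbf{b})$ and $\theta^{(k+1)}=\frac{-(\theta^{(k)})^2+\sqrt{(\theta^{(k)})^4+4(\theta^{(k)})^2}}{2}$. *)

theory Defs
  imports "HOL-Analysis.Analysis"
begin

fun theta :: "nat \<Rightarrow> real" where
  "theta 0 = 1"
| "theta (Suc k) = (- ((theta k)^2) + sqrt ((theta k)^4 + 4 * (theta k)^2)) / 2"

definition ext_fun :: "'a set \<Rightarrow> ('a \<Rightarrow> real) \<Rightarrow> 'a \<Rightarrow> ereal" where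
  "ext_fun D h x = (if x \<in> D then ereal (h x) else \<infinity>)"

text \<open>Lower semicontinuity (sequential form, equivalent in metric spaces).\<close>
definition lsc :: "('a::metric_space \<Rightarrow> ereal) \<Rightarrow> bool" where
  "lsc F \<longleftrightarrow> (\<forall>x X. X \<longlonglongrightarrow> x \<longrightarrow> F x \<le> liminf (\<lambda>k. F (X k)))"

definition proper_convex_lsc :: "'a::real_normed_vector set \<Rightarrow> ('a \<Rightarrow> real) \<Rightarrow> bool" where
  "proper_convex_lsc D h \<longleftrightarrow> D \<noteq> {} \<and> convex_on D h \<and> lsc (ext_fun D h)"

end

theory Submission
  imports Defs
begin

text \<open>For one block the estimate is the usual one-step bound of accelerated linearized
  proximal methods. The descent lemma for the L-smooth part at the extrapolated point y,
  together with the gradient inequality of g at x^k and at the comparison point, bounds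
  g(x^{k+1}); optimality of z^{k+1} for the strongly convex subproblem gives the three-point
  inequality, which bounds h(z^{k+1}) and, by convexity, h(x^{k+1}). The multiplier terms of the
  subproblem combine into the single linear term with the adjoint of the predicted multiplier.
  Dividing by theta_k^2 and using (1 - theta_{k+1}) / theta_{k+1}^2 = 1 / theta_k^2 gives the claim.\<close>

lemma theta_Suc_power2: "(theta (Suc k))^2 = (theta k)^2 * (1 - theta (Suc k))"
  \<comment> \<open>theta (Suc k) is the positive root of s^2 + (theta k)^2 s - (theta k)^2 = 0\<close>
proof -
  define t where "t = theta k"
  define s where "s = sqrt (t^4 + 4 * t^2)"
  have s2: "s^2 = t^4 + 4 * t^2"
    unfolding s_def by (intro real_sqrt_pow2) simp
  have "theta (Suc k) = (s - t^2) / 2"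
    by (simp add: s_def t_def)
  then show ?thesis
    using s2 by (simp add: t_def [symmetric] power2_eq_square power4_eq_xxxx field_simps)
qed

lemma theta_pos_le_1: "0 < theta k \<and> theta k \<le> 1"
proof (induction k)
  case 0
  then show ?case by simp
next
  case (Suc k)
  define t where "t = theta k"
  define s where "s = theta (Suc k)"
  have "t > 0" using Suc t_def by simp
  have "t^2 < sqrt (t^4 + 4 * t^2)"
    using \<open>t > 0\<close> by (intro real_less_rsqrt) (simp add: power4_eq_xxxx power2_eq_square)
  then have "s > 0" by (simp add: s_def t_def)
  have "s^2 = t^2 * (1 - s)"
    unfolding s_def t_def by (rule theta_Suc_power2)
  then have "0 \<le> t^2 * (1 - s)" by (metis zero_le_power2)
  with \<open>t > 0\<close> have "s \<le> 1" by (simp add: zero_le_mult_iff)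
  with \<open>s > 0\<close> show ?case unfolding s_def by simp
qed

lemma theta_ratio: "(1 - theta (Suc k)) / (theta (Suc k))^2 = 1 / (theta k)^2"
  using theta_Suc_power2 [of k] theta_pos_le_1 [of k] theta_pos_le_1 [of "Suc k"]
  by (simp add: field_simps)

lemma has_real_derivative_along_line:
  fixes g :: "'a::real_inner \<Rightarrow> real"
  assumes "\<And>u. (g has_derivative (\<lambda>d. G u \<bullet> d)) (at u)"
  shows "((\<lambda>s. g (y + s *\<^sub>R d)) has_real_derivative G (y + s *\<^sub>R d) \<bullet> d) (at s)"
proof -
  have "((\<lambda>s. y + s *\<^sub>R d) has_derivative (\<lambda>r. r *\<^sub>R d)) (at s)"
    by (auto intro!: derivative_eq_intros)
  from has_derivative_compose [OF this assms]
  show ?thesis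
    by (simp add: has_field_derivative_def o_def mult_commute_abs)
qed

lemma lipschitz_gradient_descent:
  fixes g :: "'a::real_inner \<Rightarrow> real"
  assumes grad: "\<And>u. (g has_derivative (\<lambda>d. G u \<bullet> d)) (at u)"
    and lip: "\<And>u v. norm (G u - G v) \<le> L * norm (u - v)"
  shows "g (y + d) \<le> g y + G y \<bullet> d + L / 2 * (norm d)^2"
proof -
  define \<psi> where "\<psi> s = g (y + s *\<^sub>R d) - s * (G y \<bullet> d) - L / 2 * s^2 * (norm d)^2" for s
  have "\<psi> 1 \<le> \<psi> 0"
  proof (rule DERIV_nonpos_imp_nonincreasing [of 0 1 \<psi>])
    fix s :: real assume s: "0 \<le> s" "s \<le> 1"
    have "(G (y + s *\<^sub>R d) - G y) \<bullet> d \<le> norm (G (y + s *\<^sub>R d) - G y) * norm d"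
      by (rule norm_cauchy_schwarz)
    also have "\<dots> \<le> L * norm (s *\<^sub>R d) * norm d"
      using lip [of "y + s *\<^sub>R d" y] by (intro mult_right_mono) auto
    finally have "(G (y + s *\<^sub>R d) - G y) \<bullet> d \<le> L * s * (norm d)^2"
      using s by (simp add: power2_eq_square)
    moreover have "(\<psi> has_real_derivative
        G (y + s *\<^sub>R d) \<bullet> d - G y \<bullet> d - L / 2 * (2 * s) * (norm d)^2) (at s)"
      unfolding \<psi>_def using has_real_derivative_along_line [OF grad, of y d s]
      by (auto intro!: derivative_eq_intros)
    ultimately show "\<exists>l. (\<psi> has_real_derivative l) (at s) \<and> l \<le> 0"
      by (auto simp: inner_diff_left)
  qed simp
  then show ?thesis by (simp add: \<psi>_def)
qed

lemma convex_gradient_inequality: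
  fixes g :: "'a::real_inner \<Rightarrow> real"
  assumes convex: "convex_on UNIV g"
    and grad: "\<And>u. (g has_derivative (\<lambda>d. G u \<bullet> d)) (at u)"
  shows "g y + G y \<bullet> (u - y) \<le> g u"
proof -
  define \<phi> where "\<phi> s = g (y + s *\<^sub>R (u - y))" for s
  have "convex_on UNIV \<phi>"
  proof (rule convex_onI)
    fix t a b :: real assume "0 < t" "t < 1"
    have "y + ((1 - t) * a + t * b) *\<^sub>R (u - y)
        = (1 - t) *\<^sub>R (y + a *\<^sub>R (u - y)) + t *\<^sub>R (y + b *\<^sub>R (u - y))"
      by (simp add: algebra_simps)
    then show "\<phi> ((1 - t) *\<^sub>R a + t *\<^sub>R b) \<le> (1 - t) * \<phi> a + t * \<phi> b"
      unfolding \<phi>_def using convex_onD [OF convex, of t] \<open>0 < t\<close> \<open>t < 1\<close> by simp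
  qed simp
  moreover have "(\<phi> has_real_derivative G y \<bullet> (u - y)) (at 0)"
    unfolding \<phi>_def using has_real_derivative_along_line [OF grad, of y "u - y" 0] by simp
  ultimately have "G y \<bullet> (u - y) * (1 - 0) \<le> \<phi> 1 - \<phi> 0"
    by (intro convex_on_imp_above_tangent) auto
  then show ?thesis by (simp add: \<phi>_def)
qed

lemma power2_norm_convex_combination:
  fixes a b :: "'a::real_inner"
  shows "(norm ((1 - t) *\<^sub>R a + t *\<^sub>R b))^2
    = (1 - t) * (norm a)^2 + t * (norm b)^2 - t * (1 - t) * (norm (b - a))^2"
  unfolding power2_norm_eq_inner
  by (simp add: inner_add_left inner_add_right inner_diff_left inner_diff_right
      inner_commute algebra_simps)

lemma prox_objective_strongly_convex:
  fixes p v w u :: "'a::real_inner" and \<mu> :: real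
  assumes convex: "convex_on D h" and "w \<in> D" "u \<in> D" "0 \<le> t" "t \<le> 1"
  defines "\<Phi> x \<equiv> p \<bullet> x + h x + \<mu> / 2 * (norm (x - v))^2"
  shows "\<Phi> ((1 - t) *\<^sub>R w + t *\<^sub>R u)
    \<le> (1 - t) * \<Phi> w + t * \<Phi> u - t * (1 - t) * (\<mu> / 2 * (norm (u - w))^2)"
proof -
  define x where "x = (1 - t) *\<^sub>R w + t *\<^sub>R u"
  have "x - v = (1 - t) *\<^sub>R (w - v) + t *\<^sub>R (u - v)"
    by (simp add: x_def algebra_simps)
  then have norm_x: "(norm (x - v))^2
      = (1 - t) * (norm (w - v))^2 + t * (norm (u - v))^2 - t * (1 - t) * (norm (u - w))^2"
    using power2_norm_convex_combination [of t "w - v" "u - v"] by simp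
  have inner_x: "p \<bullet> x = (1 - t) * (p \<bullet> w) + t * (p \<bullet> u)"
    by (simp add: x_def inner_add_right)
  have "\<Phi> x = (1 - t) * \<Phi> w + t * \<Phi> u - t * (1 - t) * (\<mu> / 2 * (norm (u - w))^2)
      + (h x - ((1 - t) * h w + t * h u))"
    unfolding \<Phi>_def norm_x inner_x by (simp add: field_simps)
  moreover have "h x \<le> (1 - t) * h w + t * h u"
    using convex_onD [OF convex, of t w u] assms(2-5) by (simp add: x_def)
  ultimately show ?thesis
    unfolding x_def by linarith
qed

lemma prox_three_point:
  fixes p v w u :: "'a::real_inner"
  assumes convex: "convex_on D h" and "w \<in> D" "u \<in> D" "0 \<le> \<mu>"
    and minimizer: "\<forall>x\<in>D. p \<bullet> w + h w + \<mu> / 2 * (norm (w - v))^2 \<le> p \<bullet> x + h x + \<mu> / 2 * (norm (x - v))^2"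
  shows "p \<bullet> w + h w + \<mu> / 2 * (norm (w - v))^2 + \<mu> / 2 * (norm (u - w))^2
    \<le> p \<bullet> u + h u + \<mu> / 2 * (norm (u - v))^2"
proof -
  define \<Phi> where "\<Phi> x = p \<bullet> x + h x + \<mu> / 2 * (norm (x - v))^2" for x
  define c where "c = \<mu> / 2 * (norm (u - w))^2"
  \<comment> \<open>compare w with the points of the segment towards u, then let them tend to w\<close>
  have "\<Phi> w + (1 - t) * c \<le> \<Phi> u" if "0 < t" "t < 1" for t
  proof -
    have "(1 - t) *\<^sub>R w + t *\<^sub>R u \<in> D"
      using convexD_alt [OF convex_on_imp_convex [OF convex] \<open>w \<in> D\<close> \<open>u \<in> D\<close>] that by simp
    then have "\<Phi> w \<le> \<Phi> ((1 - t) *\<^sub>R w + t *\<^sub>R u)"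
      using minimizer by (simp add: \<Phi>_def)
    also have "\<dots> \<le> (1 - t) * \<Phi> w + t * \<Phi> u - t * (1 - t) * c"
      unfolding \<Phi>_def c_def using that assms(1-3)
      by (intro prox_objective_strongly_convex) auto
    finally have "t * (\<Phi> w + (1 - t) * c) \<le> t * \<Phi> u"
      by (simp add: algebra_simps)
    with \<open>0 < t\<close> show ?thesis by simp
  qed
  then have "\<forall>\<^sub>F t in at_right 0. \<Phi> w + (1 - t) * c \<le> \<Phi> u"
    using eventually_at_right_real [of 0 1] by (auto elim: eventually_mono)
  moreover have "((\<lambda>t. \<Phi> w + (1 - t) * c) \<longlongrightarrow> \<Phi> w + (1 - 0) * c) (at_right 0)"
    by (intro tendsto_intros)
  ultimately have "\<Phi> w + c \<le> \<Phi> u"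
    using tendsto_upperbound [of _ _ "at_right (0::real)"] by fastforce
  then show ?thesis by (simp add: \<Phi>_def c_def)
qed

lemma smooth_convex_extrapolation:
  fixes g :: "'a::real_inner \<Rightarrow> real"
  assumes convex: "convex_on UNIV g"
    and grad: "\<And>u. (g has_derivative (\<lambda>d. G u \<bullet> d)) (at u)"
    and lip: "\<And>u v. norm (G u - G v) \<le> L * norm (u - v)"
    and "0 \<le> t" "t \<le> 1"
    and y: "y = (1 - t) *\<^sub>R x + t *\<^sub>R v"
  shows "g ((1 - t) *\<^sub>R x + t *\<^sub>R w)
    \<le> (1 - t) * g x + t * (g u + G y \<bullet> (w - u)) + L / 2 * t^2 * (norm (w - v))^2"
proof -
  define x' where "x' = (1 - t) *\<^sub>R x + t *\<^sub>R w"
  have "x' - y = t *\<^sub>R (w - v)"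
    by (simp add: x'_def y algebra_simps)
  then have norm_step: "(norm (x' - y))^2 = t^2 * (norm (w - v))^2"
    using \<open>0 \<le> t\<close> by (simp add: power_mult_distrib)
  have "x' - y = (1 - t) *\<^sub>R (x - y) + t *\<^sub>R (u - y) + t *\<^sub>R (w - u)"
    by (simp add: x'_def algebra_simps)
  then have inner_step: "G y \<bullet> (x' - y)
      = (1 - t) * (G y \<bullet> (x - y)) + t * (G y \<bullet> (u - y)) + t * (G y \<bullet> (w - u))"
    by (simp add: inner_add_right)
  have "g x' \<le> g y + G y \<bullet> (x' - y) + L / 2 * (norm (x' - y))^2"
    using lipschitz_gradient_descent [OF grad lip, of y "x' - y"] by simp
  moreover have "(1 - t) * (g y + G y \<bullet> (x - y)) \<le> (1 - t) * g x"
    using convex_gradient_inequality [OF convex grad] \<open>t \<le> 1\<close> by (intro mult_left_mono) auto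
  moreover have "t * (g y + G y \<bullet> (u - y)) \<le> t * g u"
    using convex_gradient_inequality [OF convex grad] \<open>0 \<le> t\<close> by (intro mult_left_mono) auto
  ultimately show ?thesis
    unfolding x'_def [symmetric] norm_step inner_step by (simp add: algebra_simps)
qed

lemma linearized_prox_step:
  fixes g h :: "'a::real_inner \<Rightarrow> real"
  assumes g_convex: "convex_on UNIV g"
    and grad: "\<And>u. (g has_derivative (\<lambda>d. G u \<bullet> d)) (at u)"
    and lip: "\<And>u v. norm (G u - G v) \<le> L * norm (u - v)" and "0 \<le> L"
    and h_convex: "convex_on D h"
    and "0 \<le> t" "t \<le> 1" "0 \<le> c"
    and y: "y = (1 - t) *\<^sub>R x + t *\<^sub>R v"
    and x': "x' = (1 - t) *\<^sub>R x + t *\<^sub>R w"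
    and "w \<in> D" "u \<in> D" and x_in: "x \<in> D \<or> t = 1"
    and minimizer: "\<forall>z\<in>D. (G y + q) \<bullet> w + h w + (L * t + c) / 2 * (norm (w - v))^2
      \<le> (G y + q) \<bullet> z + h z + (L * t + c) / 2 * (norm (z - v))^2"
  shows "g x' + h x' - (g u + h u)
    \<le> (1 - t) * (g x + h x - (g u + h u)) + t * (q \<bullet> (u - w))
      + L / 2 * t^2 * ((norm (v - u))^2 - (norm (w - u))^2)
      + c / 2 * t * ((norm (v - u))^2 - (norm (w - u))^2 - (norm (w - v))^2)"
proof -
  define \<mu> where "\<mu> = L * t + c"
  have "0 \<le> \<mu>"
    using assms(4,6,8) by (simp add: \<mu>_def)
  have g_step: "g x' \<le> (1 - t) * g x + t * (g u + G y \<bullet> (w - u)) + L / 2 * t^2 * (norm (w - v))^2"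
    unfolding x' using smooth_convex_extrapolation [OF g_convex grad lip assms(6,7) y] .
  have h_step: "h x' \<le> (1 - t) * h x + t * h w"
    using x_in
  proof
    assume "x \<in> D"
    then show ?thesis
      using convex_onD [OF h_convex, of t x w] assms(6,7) \<open>w \<in> D\<close> by (simp add: x')
  qed (simp add: x')
  have "(G y + q) \<bullet> w + h w + \<mu> / 2 * (norm (w - v))^2 + \<mu> / 2 * (norm (u - w))^2
      \<le> (G y + q) \<bullet> u + h u + \<mu> / 2 * (norm (u - v))^2"
    using prox_three_point [OF h_convex \<open>w \<in> D\<close> \<open>u \<in> D\<close> \<open>0 \<le> \<mu>\<close>] minimizer
    by (simp add: \<mu>_def)
  then have "h w \<le> h u + (G y + q) \<bullet> (u - w)
      + \<mu> / 2 * ((norm (v - u))^2 - (norm (w - u))^2 - (norm (w - v))^2)"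
    by (simp add: inner_diff_right norm_minus_commute algebra_simps)
  then have "t * h w \<le> t * (h u + (G y + q) \<bullet> (u - w)
      + \<mu> / 2 * ((norm (v - u))^2 - (norm (w - u))^2 - (norm (w - v))^2))"
    using \<open>0 \<le> t\<close> by (rule mult_left_mono)
  with g_step h_step have "g x' + h x' \<le> (1 - t) * g x + t * (g u + G y \<bullet> (w - u))
      + L / 2 * t^2 * (norm (w - v))^2 + (1 - t) * h x + t * (h u + (G y + q) \<bullet> (u - w)
      + \<mu> / 2 * ((norm (v - u))^2 - (norm (w - u))^2 - (norm (w - v))^2))"
    by linarith
  also have "\<dots> = (g u + h u) + (1 - t) * (g x + h x - (g u + h u)) + t * (q \<bullet> (u - w))
      + L / 2 * t^2 * ((norm (v - u))^2 - (norm (w - u))^2)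
      + c / 2 * t * ((norm (v - u))^2 - (norm (w - u))^2 - (norm (w - v))^2)"
    by (simp add: \<mu>_def inner_diff_right inner_add_left power2_eq_square field_simps)
  finally show ?thesis by simp
qed

lemma linearized_prox_step_scaled:
  fixes g h :: "'a::real_inner \<Rightarrow> real"
  assumes "convex_on UNIV g"
    and "\<And>u. (g has_derivative (\<lambda>d. G u \<bullet> d)) (at u)"
    and "\<And>u v. norm (G u - G v) \<le> L * norm (u - v)" and "0 \<le> L"
    and "convex_on D h"
    and "0 < t" "t \<le> 1" "0 \<le> c"
    and "y = (1 - t) *\<^sub>R x + t *\<^sub>R v"
    and "x' = (1 - t) *\<^sub>R x + t *\<^sub>R w"
    and "w \<in> D" "u \<in> D" "x \<in> D \<or> t = 1"
    and "\<forall>z\<in>D. (G y + q) \<bullet> w + h w + (L * t + c) / 2 * (norm (w - v))^2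
      \<le> (G y + q) \<bullet> z + h z + (L * t + c) / 2 * (norm (z - v))^2"
  shows "1 / t^2 * (g x' + h x' - (g u + h u)) - 1 / t * (q \<bullet> (u - w))
    \<le> (1 - t) / t^2 * (g x + h x - (g u + h u))
      + L / 2 * ((norm (v - u))^2 - (norm (w - u))^2)
      + c / (2 * t) * ((norm (v - u))^2 - (norm (w - u))^2 - (norm (w - v))^2)"
proof -
  have "1 / t^2 * (g x' + h x' - (g u + h u))
      \<le> 1 / t^2 * ((1 - t) * (g x + h x - (g u + h u)) + t * (q \<bullet> (u - w))
        + L / 2 * t^2 * ((norm (v - u))^2 - (norm (w - u))^2)
        + c / 2 * t * ((norm (v - u))^2 - (norm (w - u))^2 - (norm (w - v))^2))"
    using linearized_prox_step [OF assms(1-5) less_imp_le [OF assms(6)] assms(7-14)]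
    by (rule mult_left_mono) simp
  also have "\<dots> = (1 - t) / t^2 * (g x + h x - (g u + h u)) + 1 / t * (q \<bullet> (u - w))
      + L / 2 * ((norm (v - u))^2 - (norm (w - u))^2)
      + c / (2 * t) * ((norm (v - u))^2 - (norm (w - u))^2 - (norm (w - v))^2)"
    using \<open>0 < t\<close> by (simp add: field_simps power2_eq_square)
  finally show ?thesis by simp
qed

lemma theta_averages_in_convex:
  assumes "convex S" and "\<forall>k. z (Suc k) \<in> S"
    and "\<forall>k. x (Suc k) = (1 - theta k) *\<^sub>R x k + theta k *\<^sub>R z (Suc k)"
  shows "x (Suc k) \<in> S"
proof (induction k)
  case 0
  then show ?case using assms(2,3) by simp
next
  case (Suc k)
  then show ?case
    using assms theta_pos_le_1 [of "Suc k"] by (simp add: convexD_alt)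
qed

lemma inner_adjoint_add_scaleR:
  fixes A :: "'a::euclidean_space \<Rightarrow> 'c::euclidean_space"
  assumes "linear A"
  shows "adjoint A (l + c *\<^sub>R r) \<bullet> u = l \<bullet> A u + (c *\<^sub>R adjoint A r) \<bullet> u"
  using adjoint_linear [OF assms] adjoint_clauses(2) [OF assms]
  by (simp add: linear_add linear_scale inner_add_left)

theorem proposition3:
  fixes n :: nat
    and A :: "nat \<Rightarrow> 'a::euclidean_space \<Rightarrow> 'c::euclidean_space"
    and b :: 'c
    and g :: "nat \<Rightarrow> 'a \<Rightarrow> real" and G :: "nat \<Rightarrow> 'a \<Rightarrow> 'a"
    and h :: "nat \<Rightarrow> 'a \<Rightarrow> real" and D :: "nat \<Rightarrow> 'a set"
    and L eta :: "nat \<Rightarrow> real" and beta :: real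
    and x y z :: "nat \<Rightarrow> nat \<Rightarrow> 'a" and lam :: "nat \<Rightarrow> 'c"
  assumes g_convex: "\<forall>i\<in>{1..n}. convex_on UNIV (g i)"
    and g_grad: "\<forall>i\<in>{1..n}. \<forall>u. (g i has_derivative (\<lambda>d. G i u \<bullet> d)) (at u)"
    and g_lip: "\<forall>i\<in>{1..n}. \<forall>u v. norm (G i u - G i v) \<le> L i * norm (u - v)"
    and L_pos: "\<forall>i\<in>{1..n}. L i > 0"
    and h_pcl: "\<forall>i\<in>{1..n}. proper_convex_lsc (D i) (h i)"
    and A_lin: "\<forall>i\<in>{1..n}. linear (A i) \<and> A i \<noteq> (\<lambda>_. 0)"
    and beta_pos: "beta > 0"
    and eta_gt: "\<forall>i\<in>{1..n}. eta i > real n * (onorm (A i))^2"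
    and y_step: "\<forall>k. \<forall>i\<in>{1..n}.
        y (Suc k) i = (1 - theta k) *\<^sub>R x k i + theta k *\<^sub>R z k i"
    and z_step: "\<forall>k. \<forall>i\<in>{1..n}. z (Suc k) i \<in> D i \<and>
        (\<forall>u\<in>D i.
          G i (y (Suc k) i) \<bullet> z (Suc k) i + h i (z (Suc k) i) + lam k \<bullet> A i (z (Suc k) i)
          + (beta *\<^sub>R adjoint (A i) ((\<Sum>j\<in>{1..n}. A j (z k j)) - b)) \<bullet> z (Suc k) i
          + (L i * theta k + beta * eta i) / 2 * (norm (z (Suc k) i - z k i))^2
          \<le> G i (y (Suc k) i) \<bullet> u + h i u + lam k \<bullet> A i u
          + (beta *\<^sub>R adjoint (A i) ((\<Sum>j\<in>{1..n}. A j (z k j)) - b)) \<bullet> u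
          + (L i * theta k + beta * eta i) / 2 * (norm (u - z k i))^2)"
    and x_step: "\<forall>k. \<forall>i\<in>{1..n}.
        x (Suc k) i = (1 - theta k) *\<^sub>R x k i + theta k *\<^sub>R z (Suc k) i"
    and lam_step: "\<forall>k. lam (Suc k) = lam k + beta *\<^sub>R ((\<Sum>j\<in>{1..n}. A j (z (Suc k) j)) - b)"
  shows "\<forall>k. \<forall>i\<in>{1..n}. \<forall>xi\<in>D i.
    (let lamhat = lam k + beta *\<^sub>R ((\<Sum>j\<in>{1..n}. A j (z k j)) - b);
         f = (\<lambda>u. g i u + h i u)
     in (1 - theta (Suc k)) / (theta (Suc k))^2 * (f (x (Suc k) i) - f xi)
        - 1 / theta k * (adjoint (A i) lamhat \<bullet> (xi - z (Suc k) i))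
      \<le> (1 - theta k) / (theta k)^2 * (f (x k i) - f xi)
        + L i / 2 * ((norm (z k i - xi))^2 - (norm (z (Suc k) i - xi))^2)
        + beta * eta i / (2 * theta k) * ((norm (z k i - xi))^2 - (norm (z (Suc k) i - xi))^2
              - (norm (z (Suc k) i - z k i))^2))"
proof (intro allI ballI, unfold Let_def theta_ratio, goal_cases)
  case (1 k i xi)
  let ?lamhat = "lam k + beta *\<^sub>R ((\<Sum>j\<in>{1..n}. A j (z k j)) - b)"
  have "linear (A i)" and h_convex: "convex_on (D i) (h i)" and "0 \<le> L i"
    using A_lin h_pcl L_pos \<open>i \<in> {1..n}\<close> by (auto simp: proper_convex_lsc_def less_imp_le)
  have "0 \<le> real n * (onorm (A i))^2"
    by simp
  also have "\<dots> < eta i"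
    using eta_gt \<open>i \<in> {1..n}\<close> by blast
  finally have "0 \<le> beta * eta i"
    using beta_pos by simp
  \<comment> \<open>x 0 i is arbitrary, but theta 0 = 1 removes it from the first step\<close>
  have x_in: "x k i \<in> D i \<or> theta k = 1"
  proof (cases k)
    case (Suc m)
    then show ?thesis
      using theta_averages_in_convex [OF convex_on_imp_convex [OF h_convex], of "\<lambda>k. z k i" "\<lambda>k. x k i"]
        z_step x_step \<open>i \<in> {1..n}\<close> by simp
  qed simp
  have z_min: "\<forall>u\<in>D i. (G i (y (Suc k) i) + adjoint (A i) ?lamhat) \<bullet> z (Suc k) i + h i (z (Suc k) i)
        + (L i * theta k + beta * eta i) / 2 * (norm (z (Suc k) i - z k i))^2
      \<le> (G i (y (Suc k) i) + adjoint (A i) ?lamhat) \<bullet> u + h i u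
        + (L i * theta k + beta * eta i) / 2 * (norm (u - z k i))^2"
    using z_step \<open>i \<in> {1..n}\<close>
    by (simp add: inner_add_left inner_adjoint_add_scaleR [OF \<open>linear (A i)\<close>] ac_simps)
  show ?case
    by (rule linearized_prox_step_scaled [OF _ _ _ _ h_convex, where y="y (Suc k) i" and x="x k i"
          and v="z k i" and w="z (Suc k) i"])
      (use g_convex g_grad g_lip y_step x_step z_step 1 theta_pos_le_1 [of k] x_in z_min
        \<open>0 \<le> L i\<close> \<open>0 \<le> beta * eta i\<close> in auto)
qed

end
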